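(* Let $A,B\subset\mathbb{R}$ be sets of positive Lebesgue measure. Then $(A\times B)+S^1$ contains an annulus of radius $1$, i.e. a set of the form $\{x\in\mathbb{R}^2: 1-\varepsilon<|x-p|<1+\varepsilon\}$ for some $p\in\mathbb{R}^2$ and $\varepsilon>0$.
   Context: $S^1=\{x\in\mathbb{R}^2:|x|=1\}$ is the Euclidean unit circle and $X+Y=\{x+y:x\in X,y\in Y\}$. *)

theory Defs
  imports "HOL-Analysis.Analysis"
begin

end

theory Submission
  imports Defs
begin

(* Centre the annulus at (a0, b0), where a0 and b0 are points at which A and B have density
   close to 1 on all small scales. A point x of the annulus lies in (A \<times> B) + S^1 as soon as
   some u \<in> [0,1] is both (x1 - a)^2 for an a \<in> A and 1 - (x2 - b)^2 for a b \<in> B; the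
   admissible u near (x1 - a0)^2 and 1 - (x2 - b0)^2 form an interval of length \<rho>/2. The values
   that fail are images of the thin sets [a0-d, a0+d] - A and [b0-d, b0+d] - B under
   t \<mapsto> (x1 - t)^2 and t \<mapsto> 1 - (x2 - t)^2. Taking d of order \<rho> / |x1 - a0| (resp. |x2 - b0|),
   the slope 2|x1 - t| times the measure \<eta> d of the thin set is of order \<eta> \<rho>, so for small
   \<eta> the failing values cannot fill the interval. *)

lemma measure_injective_image_le:
  fixes g g' :: "real \<Rightarrow> real"
  assumes S: "S \<in> lmeasurable"
    and deriv: "\<And>t. t \<in> S \<Longrightarrow> (g has_field_derivative g' t) (at t within S)"
    and inj: "inj_on g S" and cont: "continuous_on S g'"
    and bound: "\<And>t. t \<in> S \<Longrightarrow> \<bar>g' t\<bar> \<le> K"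
  shows "g ` S \<in> lmeasurable \<and> measure lebesgue (g ` S) \<le> K * measure lebesgue S"
proof -
  have Sl: "S \<in> sets lebesgue" using S by (simp add: fmeasurableD)
  have K_int: "(\<lambda>x. K) integrable_on S"
    using S by (simp add: lmeasurable_iff_integrable_on integrable_on_const)
  have g'_int: "(\<lambda>t. \<bar>g' t\<bar> * 1) absolutely_integrable_on S"
    by (rule measurable_bounded_by_integrable_imp_absolutely_integrable[OF _ Sl K_int])
       (use bound in \<open>auto intro!: continuous_imp_measurable_on_sets_lebesgue continuous_intros cont Sl\<close>)
  let ?I = "integral S (\<lambda>t. \<bar>g' t\<bar> * 1)"
  have "(\<lambda>x. 1::real) absolutely_integrable_on (g ` S) \<and> integral (g ` S) (\<lambda>x. 1) = ?I"
    using has_absolute_integral_change_of_variables_1'[OF Sl deriv inj, of "\<lambda>x. 1" ?I] g'_int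
    by blast
  then have gS: "g ` S \<in> lmeasurable" and m: "measure lebesgue (g ` S) = ?I"
    using lmeasurable_iff_integrable_on lmeasure_integral absolutely_integrable_on_def by metis+
  have "?I \<le> integral S (\<lambda>x. K)"
    using g'_int K_int bound by (intro integral_le) (auto simp: absolutely_integrable_on_def)
  also have "\<dots> = K * measure lebesgue S"
    using lmeasure_integral[OF S] integral_mult_right[of S K "\<lambda>x. 1"] by simp
  finally show ?thesis using gS m by simp
qed

lemma measure_reflect_image_le:
  fixes c :: real
  assumes "T \<in> lmeasurable"
  shows "(\<lambda>w. c - w) ` T \<in> lmeasurable \<and> measure lebesgue ((\<lambda>w. c - w) ` T) \<le> measure lebesgue T"
proof -
  have "((\<lambda>w. c - w) has_field_derivative -1) (at t within T)" for t
    by (auto intro!: derivative_eq_intros)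
  then show ?thesis
    using measure_injective_image_le[OF assms, of "\<lambda>w. c - w" "\<lambda>_. -1" 1]
    by (auto intro: inj_onI)
qed

lemma measure_square_image_le:
  fixes S :: "real set" and c M :: real
  assumes S: "S \<in> sets lebesgue" and sub: "S \<subseteq> {c-M..c+M}"
  shows "(\<lambda>t. (c-t)^2) ` S \<in> lmeasurable \<and>
         measure lebesgue ((\<lambda>t. (c-t)^2) ` S) \<le> 2*M * measure lebesgue S"
proof -
  let ?g = "\<lambda>t. (c-t)^2"
  define S1 where "S1 = S \<inter> {..c}"
  define S2 where "S2 = S \<inter> {c<..}"
  have "bounded S" using sub bounded_subset bounded_closed_interval by blast
  then have S1m: "S1 \<in> lmeasurable" and S2m: "S2 \<in> lmeasurable"
    unfolding S1_def S2_def using S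
    by (auto intro!: bounded_set_imp_lmeasurable intro: bounded_subset)
  have deriv: "(?g has_field_derivative -2*(c-t)) (at t within X)" for t X
    by (auto intro!: derivative_eq_intros)
  have cont: "continuous_on X (\<lambda>t. -2*(c-t))" for X by (intro continuous_intros)
  have bound: "\<bar>-2*(c-t)\<bar> \<le> 2*M" if "t \<in> S" for t
    using sub that by (auto simp: abs_le_iff)
  have "inj_on ?g S1" "inj_on ?g S2"
    by (auto intro!: inj_onI simp: S1_def S2_def power2_eq_iff)
  then have im1: "?g ` S1 \<in> lmeasurable \<and> measure lebesgue (?g ` S1) \<le> 2*M * measure lebesgue S1"
    and im2: "?g ` S2 \<in> lmeasurable \<and> measure lebesgue (?g ` S2) \<le> 2*M * measure lebesgue S2"
    by (intro measure_injective_image_le[OF _ deriv _ cont] S1m S2m bound; simp add: S1_def S2_def)+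
  have S_split: "S = S1 \<union> S2" and "S1 \<inter> S2 = {}" by (auto simp: S1_def S2_def)
  then have mS: "measure lebesgue S = measure lebesgue S1 + measure lebesgue S2"
    using measure_Un3[OF S1m S2m] by simp
  have "?g ` S = ?g ` S1 \<union> ?g ` S2" using S_split by auto
  moreover have "measure lebesgue (?g ` S1 \<union> ?g ` S2) \<le> measure lebesgue (?g ` S1) + measure lebesgue (?g ` S2)"
    using im1 im2 by (intro measure_Un_le) (auto dest: fmeasurableD)
  ultimately show ?thesis using im1 im2 mS by (auto simp: distrib_left)
qed

lemma Vitali_measure_diff_ge:
  fixes A W :: "'a::euclidean_space set" and \<eta> :: real
  assumes A: "A \<in> sets lebesgue" and W: "W \<in> sets lebesgue" and \<eta>: "0 \<le> \<eta>"
    and cover: "\<And>x \<delta>. x \<in> A \<Longrightarrow> 0 < \<delta> \<Longrightarrow> \<exists>d. 0 < d \<and> d < \<delta> \<and> cball x d \<subseteq> W \<and>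
                  \<eta> * measure lebesgue (cball x d) < measure lebesgue (cball x d - A)"
  shows "ennreal \<eta> * emeasure lebesgue A \<le> emeasure lebesgue (W - A)"
proof -
  define K where "K = {(c,d). 0 < d \<and> cball c d \<subseteq> W \<and>
                    \<eta> * measure lebesgue (cball c d) < measure lebesgue (cball c d - A)}"
  have K_pos: "0 < snd i" if "i \<in> K" for i
    using that by (auto simp: K_def)
  have K_cover: "\<exists>i. i \<in> K \<and> x \<in> cball (fst i) (snd i) \<and> snd i < \<delta>" if "x \<in> A" "0 < \<delta>" for x \<delta>
    using cover[OF that] unfolding K_def by fastforce
  obtain C where C: "countable C" "C \<subseteq> K"
      "pairwise (\<lambda>i j. disjnt (cball (fst i) (snd i)) (cball (fst j) (snd j))) C"
      "negligible (A - (\<Union>i\<in>C. cball (fst i) (snd i)))"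
    using Vitali_covering_theorem_cballs[of K snd A fst, OF K_pos K_cover] by blast
  define X where "X i = cball (fst i) (snd i)" for i :: "'a \<times> real"
  define U where "U = (\<Union>i\<in>C. X i)"
  have X_sets: "X i \<in> sets lebesgue" "X i - A \<in> sets lebesgue" for i
    using A by (auto simp: X_def intro: sets.Diff)
  have X_disj: "disjoint_family_on X C" "disjoint_family_on (\<lambda>i. X i - A) C"
    using C(3) unfolding disjoint_family_on_def pairwise_def disjnt_def X_def by blast+
  have X_diff: "ennreal \<eta> * emeasure lebesgue (X i) \<le> emeasure lebesgue (X i - A)" if "i \<in> C" for i
  proof -
    have "X i - A \<in> lmeasurable"
      using A by (simp add: X_def fmeasurable_Diff)
    moreover have "\<eta> * measure lebesgue (X i) \<le> measure lebesgue (X i - A)"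
      using that C(2) unfolding K_def X_def by auto
    ultimately show ?thesis
      using \<eta> by (simp add: X_def emeasure_eq_measure2 ennreal_mult'[symmetric])
  qed
  have U_sum: "emeasure lebesgue U = (\<integral>\<^sup>+i. emeasure lebesgue (X i) \<partial>count_space C)"
    unfolding U_def using X_sets(1) C(1) X_disj(1) by (rule emeasure_UN_countable)
  have "emeasure lebesgue (\<Union>i\<in>C. X i - A) = (\<integral>\<^sup>+i. emeasure lebesgue (X i - A) \<partial>count_space C)"
    using X_sets(2) C(1) X_disj(2) by (rule emeasure_UN_countable)
  moreover have "U - A = (\<Union>i\<in>C. X i - A)" by (auto simp: U_def)
  ultimately have UA_sum: "emeasure lebesgue (U - A) = (\<integral>\<^sup>+i. emeasure lebesgue (X i - A) \<partial>count_space C)"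
    by simp
  have U_sets: "U \<in> sets lebesgue"
    unfolding U_def using C(1) X_sets(1) by (intro sets.countable_UN') auto
  have "emeasure lebesgue A \<le> emeasure lebesgue (U \<union> (A - U))"
    using A U_sets by (intro emeasure_mono) auto
  also have "\<dots> = emeasure lebesgue U"
    using C(4) U_sets by (intro emeasure_Un_null_set) (simp_all add: U_def X_def negligible_iff_null_sets)
  finally have "ennreal \<eta> * emeasure lebesgue A \<le> ennreal \<eta> * emeasure lebesgue U"
    by (rule mult_left_mono) simp
  also have "\<dots> = (\<integral>\<^sup>+i. ennreal \<eta> * emeasure lebesgue (X i) \<partial>count_space C)"
    by (simp add: U_sum nn_integral_cmult)
  also have "\<dots> \<le> emeasure lebesgue (U - A)"
    unfolding UA_sum using X_diff by (intro nn_integral_mono) simp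
  also have "\<dots> \<le> emeasure lebesgue (W - A)"
  proof (rule emeasure_mono)
    show "U - A \<subseteq> W - A"
      using C(2) unfolding U_def X_def K_def by fastforce
  qed (use A W in auto)
  finally show ?thesis .
qed

lemma exists_lmeasurable_subset_pos_measure:
  fixes A :: "'a::euclidean_space set"
  assumes A: "A \<in> sets lebesgue" and pos: "emeasure lebesgue A > 0"
  obtains A' where "A' \<subseteq> A" "A' \<in> lmeasurable" "measure lebesgue A' > 0"
proof -
  have "\<exists>n::nat. A \<inter> cball 0 (real n) \<notin> null_sets lebesgue"
  proof (rule ccontr)
    assume "\<not> ?thesis"
    then have "(\<Union>n::nat. A \<inter> cball 0 (real n)) \<in> null_sets lebesgue"
      by (intro null_sets_UN) auto
    moreover have "(\<Union>n::nat. A \<inter> cball 0 (real n)) = A"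
      by (auto simp: real_arch_simple)
    ultimately show False
      using pos by (simp add: null_sets_def)
  qed
  then obtain n :: nat where n: "A \<inter> cball 0 (real n) \<notin> null_sets lebesgue" ..
  have "A \<inter> cball 0 (real n) \<in> lmeasurable"
    using A by (intro fmeasurableI2[OF lmeasurable_cball]) auto
  with n show ?thesis
    by (intro that[of "A \<inter> cball 0 (real n)"])
       (auto simp: null_sets_def emeasure_eq_measure2 zero_less_measure_iff)
qed

lemma lebesgue_density_point:
  fixes A :: "real set" and \<eta> :: real
  assumes A: "A \<in> sets lebesgue" "emeasure lebesgue A > 0" and \<eta>: "0 < \<eta>"
  shows "\<exists>a r. 0 < r \<and> (\<forall>d. 0 < d \<and> d \<le> r \<longrightarrow> measure lebesgue ({a-d..a+d} - A) \<le> \<eta> * (2*d))"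
proof (rule ccontr)
  assume no_point: "\<not> ?thesis"
  obtain A' where A': "A' \<subseteq> A" "A' \<in> lmeasurable" "measure lebesgue A' > 0"
    using exists_lmeasurable_subset_pos_measure[OF A] .
  have "0 < \<eta> * measure lebesgue A'" using A'(3) \<eta> by simp
  then obtain W where W: "open W" "A' \<subseteq> W"
      and W_small: "emeasure lebesgue (W - A') < ennreal (\<eta> * measure lebesgue A')"
    using sets_lebesgue_outer_open[of A'] A'(2) by (metis fmeasurableD)
  have "\<exists>d. 0 < d \<and> d < \<delta> \<and> cball x d \<subseteq> W \<and>
          \<eta> * measure lebesgue (cball x d) < measure lebesgue (cball x d - A')"
    if x: "x \<in> A'" and \<delta>: "0 < \<delta>" for x \<delta>
  proof -
    obtain e where e: "0 < e" "ball x e \<subseteq> W"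
      using W x open_contains_ball_eq by blast
    have "0 < min (\<delta>/2) (e/2)" using e \<delta> by simp
    then have "\<not> (\<forall>d. 0 < d \<and> d \<le> min (\<delta>/2) (e/2) \<longrightarrow>
                 measure lebesgue ({x-d..x+d} - A) \<le> \<eta> * (2*d))"
      using no_point by blast
    then obtain d where d: "0 < d" "d \<le> min (\<delta>/2) (e/2)"
        and thin: "\<eta> * (2*d) < measure lebesgue ({x-d..x+d} - A)"
      by (auto simp: not_le)
    have "measure lebesgue ({x-d..x+d} - A) \<le> measure lebesgue ({x-d..x+d} - A')"
    proof (rule measure_mono_fmeasurable)
      show "{x-d..x+d} - A \<in> sets lebesgue" using A(1) by auto
      show "{x-d..x+d} - A' \<in> lmeasurable" using A'(2) by (simp add: fmeasurable_Diff fmeasurableD)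
    qed (use A'(1) in auto)
    moreover have "cball x d \<subseteq> W"
    proof -
      have "cball x d \<subseteq> ball x e" using d e(1) by (auto simp: dist_norm)
      then show ?thesis using e(2) by blast
    qed
    ultimately show ?thesis
      using d thin \<delta> by (intro exI[of _ d]) (simp add: cball_eq_atLeastAtMost)
  qed
  then have "ennreal \<eta> * emeasure lebesgue A' \<le> emeasure lebesgue (W - A')"
    using A'(2) W(1) \<eta> by (intro Vitali_measure_diff_ge) (auto intro: fmeasurableD)
  with W_small A'(2) \<eta> show False
    by (simp add: emeasure_eq_measure2 ennreal_mult'[symmetric])
qed

lemma exists_square_root_near:
  fixes z u \<rho> :: real
  assumes \<rho>: "0 < \<rho>" and u: "0 \<le> u" and close: "\<bar>u - z\<^sup>2\<bar> \<le> \<rho>"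
  shows "\<exists>t. t\<^sup>2 = u \<and> \<bar>z - t\<bar> \<le> \<rho> / max \<bar>z\<bar> (sqrt \<rho>)"
proof -
  define s where "s = sqrt u"
  define D where "D = \<bar>\<bar>z\<bar> - s\<bar>"
  have s: "0 \<le> s" "s\<^sup>2 = u" using u by (auto simp: s_def)
  have "(\<bar>z\<bar> - s) * (\<bar>z\<bar> + s) = z\<^sup>2 - u"
    using s(2) by (simp add: algebra_simps power2_eq_square abs_mult_self_eq)
  then have "D * (\<bar>z\<bar> + s) = \<bar>z\<^sup>2 - u\<bar>"
    using s(1) by (metis D_def abs_mult abs_of_nonneg abs_ge_zero add_nonneg_nonneg)
  then have D_prod: "D * (\<bar>z\<bar> + s) \<le> \<rho>"
    using close by (simp add: abs_minus_commute)
  have D_nonneg: "0 \<le> D" by (simp add: D_def)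
  have "D * \<bar>z\<bar> \<le> \<rho>"
    using D_prod D_nonneg s(1) by (smt (verit) distrib_left mult_nonneg_nonneg)
  moreover have "D * sqrt \<rho> \<le> \<rho>"
  proof -
    have "D\<^sup>2 \<le> \<rho>"
      using D_prod D_nonneg s(1) unfolding power2_eq_square
      by (smt (verit) D_def mult_left_mono abs_ge_zero)
    then have "D \<le> sqrt \<rho>" by (simp add: real_le_rsqrt)
    then show ?thesis
      using \<rho> mult_right_mono[of D "sqrt \<rho>" "sqrt \<rho>"] by simp
  qed
  ultimately have "D * max \<bar>z\<bar> (sqrt \<rho>) \<le> \<rho>" by (simp add: max_def)
  moreover have "0 < max \<bar>z\<bar> (sqrt \<rho>)" using \<rho> by (simp add: less_max_iff_disj)
  ultimately have "D \<le> \<rho> / max \<bar>z\<bar> (sqrt \<rho>)" by (simp add: pos_le_divide_eq)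
  moreover have "\<bar>z - (if 0 \<le> z then s else -s)\<bar> = D" by (simp add: D_def abs_if)
  ultimately show ?thesis using s(2) by (intro exI[of _ "if 0 \<le> z then s else -s"]) auto
qed

lemma near_root_radius_bounds:
  fixes z \<rho> :: real
  assumes "0 < \<rho>"
  defines "d \<equiv> \<rho> / max \<bar>z\<bar> (sqrt \<rho>)"
  shows "0 < d" "d \<le> sqrt \<rho>" "(\<bar>z\<bar> + d) * d \<le> 2*\<rho>"
proof -
  have M_pos: "0 < max \<bar>z\<bar> (sqrt \<rho>)" using assms by (simp add: less_max_iff_disj)
  show d_pos: "0 < d" using assms M_pos by (simp add: d_def)
  have "d \<le> \<rho> / sqrt \<rho>"
    unfolding d_def using assms M_pos by (intro divide_left_mono) auto
  then show d_le: "d \<le> sqrt \<rho>" using assms by (simp add: real_div_sqrt)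
  have "\<bar>z\<bar> * d \<le> \<rho>"
    using M_pos d_pos by (simp add: d_def field_simps mult_left_mono)
  moreover have "d * d \<le> sqrt \<rho> * sqrt \<rho>"
    using d_le d_pos assms by (intro mult_mono) auto
  moreover have "(\<bar>z\<bar> + d) * d = \<bar>z\<bar> * d + d * d" by (rule distrib_right)
  ultimately show "(\<bar>z\<bar> + d) * d \<le> 2*\<rho>"
    using assms(1) by simp
qed

lemma square_distances_near_density_point:
  fixes A :: "real set" and a0 x \<eta> r \<rho> :: real
  assumes A: "A \<in> sets lebesgue" and \<eta>: "0 \<le> \<eta>" and \<rho>: "0 < \<rho>" "sqrt \<rho> \<le> r"
    and density: "\<forall>d. 0 < d \<and> d \<le> r \<longrightarrow> measure lebesgue ({a0-d..a0+d} - A) \<le> \<eta> * (2*d)"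
  obtains T where "T \<in> lmeasurable" "measure lebesgue T \<le> 8*\<eta>*\<rho>"
    "\<And>u. 0 \<le> u \<Longrightarrow> \<bar>u - (x - a0)\<^sup>2\<bar> \<le> \<rho> \<Longrightarrow> u \<notin> T \<Longrightarrow> \<exists>a\<in>A. (x - a)\<^sup>2 = u"
proof -
  define z where "z = x - a0"
  define d where "d = \<rho> / max \<bar>z\<bar> (sqrt \<rho>)"
  have d: "0 < d" "d \<le> sqrt \<rho>" "(\<bar>z\<bar> + d) * d \<le> 2*\<rho>"
    using near_root_radius_bounds[OF \<rho>(1)] by (simp_all add: d_def)
  define S where "S = {a0-d..a0+d} - A"
  define T where "T = (\<lambda>a. (x - a)\<^sup>2) ` S"
  have "S \<subseteq> {x - (\<bar>z\<bar> + d)..x + (\<bar>z\<bar> + d)}"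
    by (auto simp: S_def z_def abs_le_iff)
  moreover have "S \<in> sets lebesgue" using A by (auto simp: S_def)
  ultimately have T: "T \<in> lmeasurable" "measure lebesgue T \<le> 2*(\<bar>z\<bar> + d) * measure lebesgue S"
    using measure_square_image_le[of S x "\<bar>z\<bar> + d"] unfolding T_def by blast+
  have "measure lebesgue S \<le> \<eta> * (2*d)"
    using density d \<rho>(2) by (simp add: S_def)
  then have "measure lebesgue T \<le> 2*(\<bar>z\<bar> + d) * (\<eta> * (2*d))"
    using T(2) d(1) by (smt (verit) abs_ge_zero mult_left_mono)
  also have "\<dots> = 4*\<eta> * ((\<bar>z\<bar> + d) * d)" by (simp add: algebra_simps)
  also have "\<dots> \<le> 4*\<eta> * (2*\<rho>)" using d(3) \<eta> by (intro mult_left_mono) auto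
  finally have "measure lebesgue T \<le> 8*\<eta>*\<rho>" by simp
  moreover have "\<exists>a\<in>A. (x - a)\<^sup>2 = u"
    if u: "0 \<le> u" "\<bar>u - (x - a0)\<^sup>2\<bar> \<le> \<rho>" "u \<notin> T" for u
  proof -
    obtain t where t: "t\<^sup>2 = u" "\<bar>z - t\<bar> \<le> d"
      using exists_square_root_near[OF \<rho>(1) u(1)] u(2) by (auto simp: z_def d_def)
    have "x - t \<in> {a0-d..a0+d}" using t(2) by (auto simp: z_def abs_le_iff)
    moreover have "x - t \<notin> S"
    proof
      assume "x - t \<in> S"
      then have "(x - (x - t))\<^sup>2 \<in> T" unfolding T_def by (rule imageI)
      then show False using u(3) t(1) by simp
    qed
    ultimately have "x - t \<in> A" by (simp add: S_def)
    with t(1) show ?thesis by force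
  qed
  ultimately show ?thesis using T(1) that by blast
qed

lemma interval_in_two_windows:
  fixes c c' \<rho> :: real
  assumes "0 \<le> c" "c' \<le> 1" "\<bar>c - c'\<bar> \<le> \<rho>/4" "0 < \<rho>" "\<rho> \<le> 1"
  obtains m where "\<And>u. u \<in> {m..m+\<rho>/2} \<Longrightarrow> 0 \<le> u \<and> u \<le> 1 \<and> \<bar>u - c\<bar> \<le> \<rho> \<and> \<bar>u - c'\<bar> \<le> \<rho>"
proof
  fix u
  assume "u \<in> {min (max (c - \<rho>/2) 0) (1 - \<rho>/2)..min (max (c - \<rho>/2) 0) (1 - \<rho>/2) + \<rho>/2}"
  then show "0 \<le> u \<and> u \<le> 1 \<and> \<bar>u - c\<bar> \<le> \<rho> \<and> \<bar>u - c'\<bar> \<le> \<rho>"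
    using assms unfolding abs_le_iff min_def max_def by (auto split: if_splits)
qed

lemma unit_circle_through_product:
  fixes A B :: "real set" and a0 b0 x y \<eta> r \<rho> :: real
  assumes A: "A \<in> sets lebesgue" and B: "B \<in> sets lebesgue"
    and \<eta>: "0 \<le> \<eta>" "\<eta> < 1/32" and \<rho>: "0 < \<rho>" "\<rho> \<le> 1" "sqrt \<rho> \<le> r"
    and density_A: "\<forall>d. 0 < d \<and> d \<le> r \<longrightarrow> measure lebesgue ({a0-d..a0+d} - A) \<le> \<eta> * (2*d)"
    and density_B: "\<forall>d. 0 < d \<and> d \<le> r \<longrightarrow> measure lebesgue ({b0-d..b0+d} - B) \<le> \<eta> * (2*d)"
    and near: "\<bar>(x - a0)\<^sup>2 + (y - b0)\<^sup>2 - 1\<bar> \<le> \<rho>/4"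
  shows "\<exists>a\<in>A. \<exists>b\<in>B. (x - a)\<^sup>2 + (y - b)\<^sup>2 = 1"
proof -
  obtain TA where TA: "TA \<in> lmeasurable" "measure lebesgue TA \<le> 8*\<eta>*\<rho>"
      "\<And>u. 0 \<le> u \<Longrightarrow> \<bar>u - (x - a0)\<^sup>2\<bar> \<le> \<rho> \<Longrightarrow> u \<notin> TA \<Longrightarrow> \<exists>a\<in>A. (x - a)\<^sup>2 = u"
    using square_distances_near_density_point[OF A \<eta>(1) \<rho>(1,3) density_A] by blast
  obtain TB where TB: "TB \<in> lmeasurable" "measure lebesgue TB \<le> 8*\<eta>*\<rho>"
      "\<And>w. 0 \<le> w \<Longrightarrow> \<bar>w - (y - b0)\<^sup>2\<bar> \<le> \<rho> \<Longrightarrow> w \<notin> TB \<Longrightarrow> \<exists>b\<in>B. (y - b)\<^sup>2 = w"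
    using square_distances_near_density_point[OF B \<eta>(1) \<rho>(1,3) density_B] by blast
  define TB' where "TB' = (\<lambda>w. 1 - w) ` TB"
  have TB': "TB' \<in> lmeasurable" "measure lebesgue TB' \<le> 8*\<eta>*\<rho>"
    using measure_reflect_image_le[OF TB(1), of 1] TB(2) by (auto simp: TB'_def)
  obtain m where m: "\<And>u. u \<in> {m..m+\<rho>/2} \<Longrightarrow>
      0 \<le> u \<and> u \<le> 1 \<and> \<bar>u - (x - a0)\<^sup>2\<bar> \<le> \<rho> \<and> \<bar>u - (1 - (y - b0)\<^sup>2)\<bar> \<le> \<rho>"
  proof (rule interval_in_two_windows)
    show "\<bar>(x - a0)\<^sup>2 - (1 - (y - b0)\<^sup>2)\<bar> \<le> \<rho>/4"
      using near by (simp add: diff_diff_eq2)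
  qed (use \<rho> in auto)
  have "\<not> {m..m+\<rho>/2} \<subseteq> TA \<union> TB'"
  proof
    assume "{m..m+\<rho>/2} \<subseteq> TA \<union> TB'"
    then have "\<rho>/2 \<le> measure lebesgue (TA \<union> TB')"
      using \<rho>(1) TA(1) TB'(1) measure_mono_fmeasurable[of "{m..m+\<rho>/2}" "TA \<union> TB'" lebesgue]
      by auto
    also have "\<dots> \<le> measure lebesgue TA + measure lebesgue TB'"
      using TA(1) TB'(1) by (intro measure_Un_le) (auto dest: fmeasurableD)
    moreover have "(16*\<eta>) * \<rho> < (1/2) * \<rho>"
      using \<eta> \<rho>(1) by (intro mult_strict_right_mono) auto
    ultimately show False using TA(2) TB'(2) by linarith
  qed
  then obtain u where u: "u \<in> {m..m+\<rho>/2}" "u \<notin> TA" "u \<notin> TB'" by blast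
  obtain a where a: "a \<in> A" "(x - a)\<^sup>2 = u" using TA(3) m[OF u(1)] u(2) by blast
  obtain b where b: "b \<in> B" "(y - b)\<^sup>2 = 1 - u"
  proof (rule TB(3)[THEN bexE])
    show "1 - u \<notin> TB" using u(3) by (force simp: TB'_def)
  qed (use m[OF u(1)] in \<open>auto simp: abs_minus_commute algebra_simps\<close>)
  have "(x - a)\<^sup>2 + (y - b)\<^sup>2 = 1" using a(2) b(2) by simp
  then show ?thesis using a(1) b(1) by blast
qed

lemma abs_square_sub_one_le:
  fixes N \<epsilon> :: real
  assumes "\<epsilon> \<le> 1" "1 - \<epsilon> < N" "N < 1 + \<epsilon>"
  shows "\<bar>N\<^sup>2 - 1\<bar> \<le> 3*\<epsilon>"
proof -
  have "N\<^sup>2 - 1 = (N - 1) * (N + 1)" by (simp add: power2_eq_square algebra_simps)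
  then have "\<bar>N\<^sup>2 - 1\<bar> = \<bar>N - 1\<bar> * (N + 1)"
    using assms by (simp add: abs_mult)
  also have "\<dots> \<le> \<epsilon> * 3"
    using assms by (intro mult_mono) auto
  finally show ?thesis by simp
qed

lemma norm_vec2: "norm (x :: real^2) = sqrt ((x$1)\<^sup>2 + (x$2)\<^sup>2)"
  by (simp add: norm_eq_sqrt_inner inner_vec_def sum_2 power2_eq_square)

theorem mainTheorem3:
  fixes A B :: "real set"
  assumes "A \<in> sets lebesgue" and "emeasure lebesgue A > 0"
      and "B \<in> sets lebesgue" and "emeasure lebesgue B > 0"
  shows "\<exists>(p :: real^2) (\<epsilon>::real). \<epsilon> > 0 \<and>
           {x :: real^2. 1 - \<epsilon> < norm (x - p) \<and> norm (x - p) < 1 + \<epsilon>}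
             \<subseteq> {u + v | u v. u \<in> (\<lambda>(a,b). vector [a, b]) ` (A \<times> B) \<and> v \<in> sphere 0 1}"
proof -
  define \<eta> :: real where "\<eta> = 1/64"
  obtain a0 rA where rA: "0 < rA" "\<forall>d. 0 < d \<and> d \<le> rA \<longrightarrow> measure lebesgue ({a0-d..a0+d} - A) \<le> \<eta> * (2*d)"
    using lebesgue_density_point[OF assms(1,2), of \<eta>] by (auto simp: \<eta>_def)
  obtain b0 rB where rB: "0 < rB" "\<forall>d. 0 < d \<and> d \<le> rB \<longrightarrow> measure lebesgue ({b0-d..b0+d} - B) \<le> \<eta> * (2*d)"
    using lebesgue_density_point[OF assms(3,4), of \<eta>] by (auto simp: \<eta>_def)
  define r where "r = min (min rA rB) 1"
  have r: "0 < r" "r \<le> 1" using rA(1) rB(1) by (auto simp: r_def)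
  have \<rho>: "0 < r\<^sup>2" "r\<^sup>2 \<le> 1" "sqrt (r\<^sup>2) \<le> r" using r by (auto simp: power_le_one)
  have density_A: "\<forall>d. 0 < d \<and> d \<le> r \<longrightarrow> measure lebesgue ({a0-d..a0+d} - A) \<le> \<eta> * (2*d)"
    and density_B: "\<forall>d. 0 < d \<and> d \<le> r \<longrightarrow> measure lebesgue ({b0-d..b0+d} - B) \<le> \<eta> * (2*d)"
    using rA(2) rB(2) by (auto simp: r_def)
  define \<epsilon> where "\<epsilon> = r\<^sup>2 / 12"
  have \<epsilon>: "0 < \<epsilon>" "\<epsilon> \<le> 1" using \<rho> by (auto simp: \<epsilon>_def)
  have "x \<in> {u + v | u v. u \<in> (\<lambda>(a,b). vector [a, b]) ` (A \<times> B) \<and> v \<in> sphere 0 1}"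
    if "1 - \<epsilon> < norm (x - vector [a0, b0])" "norm (x - vector [a0, b0]) < 1 + \<epsilon>" for x :: "real^2"
  proof -
    have "\<bar>(x$1 - a0)\<^sup>2 + (x$2 - b0)\<^sup>2 - 1\<bar> \<le> r\<^sup>2 / 4"
      using abs_square_sub_one_le[OF \<epsilon>(2) that] by (simp add: norm_vec2 \<epsilon>_def)
    then obtain a b where "a \<in> A" "b \<in> B" "(x$1 - a)\<^sup>2 + (x$2 - b)\<^sup>2 = 1"
      using unit_circle_through_product[OF assms(1,3) _ _ \<rho> density_A density_B, where x = "x$1" and y = "x$2"]
      by (auto simp: \<eta>_def)
    then show ?thesis
      by (intro CollectI exI[of _ "vector [a, b]"] exI[of _ "x - vector [a, b]"]) (auto simp: norm_vec2)
  qed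
  then show ?thesis using \<epsilon>(1) by blast
qed

end
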